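(* Let $G=(V,E)$ be an unweighted undirected graph with $n$ vertices, and let $H$ be a $(1\pm\varepsilon)$-spectral sparsifier of $G$ for some small enough constant $\varepsilon>0$. Let $\widehat{H}$ denote the unweighted version of $H$. If for a pair of vertices $u,v\in V$ we set $s:=d_{\widehat{H}}(u,v)$, then $$R^G_{u,v}=\widetilde{\Omega}\!\left(\frac{s^3}{n^2}\right)\quad\text{and}\quad R^H_{u,v}=\widetilde{\Omega}\!\left(\frac{s^3}{n^2}\right).$$
   Context: A $(1\pm\varepsilon)$-spectral sparsifier of $G$ is a weighted graph $H=(V,E_H,w)$ with $E_H\subseteq E$ and positive weights such that $(1-\varepsilon)L_H\preceq L_G\preceq(1+\varepsilon)L_H$, where $L_G=B_G^\top B_G$ ($B_G$ the edge–vertex incidence matrix), $L_H=B_H^\top WB_H$ ($W$ the diagonal matrix of edge weights), and $A\preceq B$ means $x^\top Ax\le x^\top Bx$ for all $x$. $\widehat{H}$ is the graph $(V,E_H)$ with all weights equal to $1$, and $d_{\widehat{H}}$ its shortest-path (hop) distance. The effective resistance between $u,v$ in a graph $K$ is $R^K_{u,v}=b_{uv}^\top L_K^{+}b_{uv}$, where $b_{uv}=\chi_u-\chi_v$ and $L_K^+$ is the Moore–Penrose pseudoinverse. $\widetilde{\Omega}(f)$ means $f/\mathrm{polylog}(n)$. *)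

theory Defs
  imports Jordan_Normal_Form.Matrix
begin

definition simple_graph :: "nat \<Rightarrow> nat set set \<Rightarrow> bool" where
  "simple_graph n E \<longleftrightarrow> (\<forall>e\<in>E. e \<subseteq> {0..<n} \<and> card e = 2)"

definition chi :: "nat \<Rightarrow> nat \<Rightarrow> real vec" where
  "chi n u = vec n (\<lambda>i. if i = u then 1 else 0)"

definition bvec :: "nat \<Rightarrow> nat \<Rightarrow> nat \<Rightarrow> real vec" where
  "bvec n u v = chi n u - chi n v"

definition edge_mat :: "nat \<Rightarrow> nat set \<Rightarrow> real mat" where
  "edge_mat n e = mat n n (\<lambda>(i,j). if i \<in> e \<and> j \<in> e then (if i = j then 1 else -1) else 0)"

definition laplacian :: "nat \<Rightarrow> nat set set \<Rightarrow> (nat set \<Rightarrow> real) \<Rightarrow> real mat" where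
  "laplacian n E w = mat n n (\<lambda>(i,j). \<Sum>e\<in>E. w e * edge_mat n e $$ (i,j))"

definition ulaplacian :: "nat \<Rightarrow> nat set set \<Rightarrow> real mat" where
  "ulaplacian n E = laplacian n E (\<lambda>_. 1)"

definition loewner_le :: "nat \<Rightarrow> real mat \<Rightarrow> real mat \<Rightarrow> bool" where
  "loewner_le n A B \<longleftrightarrow> (\<forall>x \<in> carrier_vec n. x \<bullet> (A *\<^sub>v x) \<le> x \<bullet> (B *\<^sub>v x))"

definition is_pinv :: "nat \<Rightarrow> real mat \<Rightarrow> real mat \<Rightarrow> bool" where
  "is_pinv n A P \<longleftrightarrow> P \<in> carrier_mat n n \<and> A * P * A = A \<and> P * A * P = P \<and>
     transpose_mat (A * P) = A * P \<and> transpose_mat (P * A) = P * A"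

definition pinv :: "nat \<Rightarrow> real mat \<Rightarrow> real mat" where
  "pinv n A = (THE P. is_pinv n A P)"

definition eff_res :: "nat \<Rightarrow> real mat \<Rightarrow> nat \<Rightarrow> nat \<Rightarrow> real" where
  "eff_res n L u v = bvec n u v \<bullet> (pinv n L *\<^sub>v bvec n u v)"

definition spectral_sparsifier ::
  "nat \<Rightarrow> real \<Rightarrow> nat set set \<Rightarrow> nat set set \<Rightarrow> (nat set \<Rightarrow> real) \<Rightarrow> bool" where
  "spectral_sparsifier n eps E EH w \<longleftrightarrow> EH \<subseteq> E \<and> (\<forall>e\<in>EH. w e > 0) \<and>
     loewner_le n ((1 - eps) \<cdot>\<^sub>m laplacian n EH w) (ulaplacian n E) \<and>
     loewner_le n (ulaplacian n E) ((1 + eps) \<cdot>\<^sub>m laplacian n EH w)"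

definition walk_len :: "nat set set \<Rightarrow> nat \<Rightarrow> nat \<Rightarrow> nat \<Rightarrow> bool" where
  "walk_len E u v k \<longleftrightarrow> (\<exists>p :: nat \<Rightarrow> nat. p 0 = u \<and> p k = v \<and> (\<forall>i<k. {p i, p (Suc i)} \<in> E))"

definition hop_dist :: "nat set set \<Rightarrow> nat \<Rightarrow> nat \<Rightarrow> nat" where
  "hop_dist E u v = (LEAST k. walk_len E u v k)"

end

theory Submission
  imports Defs "Jordan_Normal_Form.Determinant"
begin

text \<open>Layer the vertices by their hop distance from u in H, truncated at s = d(u, v). A potential
  that is constant on layers and jumps by d_k across the k-th cut has energy sum_k d_k^2 c_k in H,
  where c_k is the H-weight of that cut, and the effective resistance between u and v is at least
  the squared potential drop divided by the energy. Testing the sparsifier inequalities on such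
  potentials bounds c_k by the number N_k of G-edges across the cut and shows that few G-edges
  cross two consecutive cuts; counting the remaining edges between adjacent layers gives
  sum_k sqrt N_k <= 2 n. Choosing d_k = 1 / sqrt c_k and applying Cauchy-Schwarz yields
  s^3 <= 5 n^2 R for the effective resistance R in G and in H, so the bound holds without any
  polylogarithmic loss.\<close>

section \<open>Sums, quadratic forms and pseudoinverses\<close>

lemma sum_if_mem_subset: "finite A \<Longrightarrow> e \<subseteq> A \<Longrightarrow> (\<Sum>i\<in>A. if i \<in> e then f i else 0) = (\<Sum>i\<in>e. f i)"
  by (simp add: sum.inter_restrict[symmetric] Int_absorb1)

lemma sum_indicator_eq_card:
  "finite F \<Longrightarrow> (\<Sum>e\<in>F. if P e then 1 else 0) = real (card {e\<in>F. P e})"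
  by (simp add: sum.inter_filter[symmetric])

lemma power2_sum_if_unique:
  fixes g :: "nat \<Rightarrow> real"
  assumes "finite K" and unique: "\<And>k j. k \<in> K \<Longrightarrow> j \<in> K \<Longrightarrow> P k \<Longrightarrow> P j \<Longrightarrow> k = j"
  shows "(\<Sum>k\<in>K. if P k then g k else 0)\<^sup>2 = (\<Sum>k\<in>K. if P k then (g k)\<^sup>2 else 0)"
proof (cases "\<exists>k\<in>K. P k")
  case True
  then obtain k0 where k0: "k0 \<in> K" "P k0" by blast
  then have "P k \<longleftrightarrow> k = k0" if "k \<in> K" for k using unique that by blast
  then have "(\<Sum>k\<in>K. if P k then f k else 0) = (\<Sum>k\<in>K. if k = k0 then f k else 0)" for f :: "nat \<Rightarrow> real"
    by (intro sum.cong) auto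
  then show ?thesis using k0 \<open>finite K\<close> by (simp add: sum.delta')
qed auto

lemma sum_lessThan_if_less:
  fixes f :: "nat \<Rightarrow> real"
  assumes "l \<le> s"
  shows "(\<Sum>k<s. if k < l then f k else 0) = (\<Sum>k<l. f k)"
proof -
  have "{..<s} \<inter> {k. k < l} = {..<l}" using assms by auto
  then show ?thesis by (simp add: sum.If_cases)
qed

lemma sum_lessThan_shift_le:
  fixes f :: "nat \<Rightarrow> real"
  assumes "\<And>k. 0 \<le> f k"
  shows "(\<Sum>k<s. if k = 0 then 0 else f (k - 1)) \<le> (\<Sum>k<s. f k)"
proof (cases s)
  case (Suc t)
  have "(\<Sum>k<Suc t. if k = 0 then 0 else f (k - 1)) = (\<Sum>k<t. f k)"
    unfolding sum.lessThan_Suc_shift by simp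
  also have "\<dots> \<le> (\<Sum>k<Suc t. f k)" using assms by simp
  finally show ?thesis using Suc by simp
qed simp

lemma sum_lessThan_Suc_le:
  fixes f :: "nat \<Rightarrow> real"
  assumes "f s \<le> f 0"
  shows "(\<Sum>k<s. f (Suc k)) \<le> (\<Sum>k<s. f k)"
  using assms sum.lessThan_Suc_shift[of f s] sum.lessThan_Suc[of f s] by simp

lemma nat_crossing_step:
  fixes f :: "nat \<Rightarrow> nat"
  assumes "f 0 \<le> k" and "k < f m"
  shows "\<exists>i<m. f i \<le> k \<and> k < f (Suc i)"
  using assms
proof (induction m)
  case (Suc m)
  show ?case
  proof (cases "k < f m")
    case True
    then show ?thesis using Suc.IH Suc.prems(1) less_SucI by blast
  next
    case False
    then show ?thesis using Suc.prems(2) by (intro exI[of _ m]) simp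
  qed
qed simp

lemma nonneg_quadratic_discriminant:
  fixes a b c :: real
  assumes nonneg: "\<And>t. 0 \<le> a + 2 * b * t + c * t\<^sup>2" and c: "0 \<le> c"
  shows "b\<^sup>2 \<le> a * c"
proof (cases "c = 0")
  case True
  have "b = 0"
  proof (rule ccontr)
    assume "b \<noteq> 0"
    then have "a + 2 * b * (- (a + 1) / (2 * b)) + c * (- (a + 1) / (2 * b))\<^sup>2 = -1"
      using True by (simp add: field_simps)
    then show False using nonneg[of "- (a + 1) / (2 * b)"] by simp
  qed
  then show ?thesis using True by simp
next
  case False
  then have c_pos: "0 < c" using c by simp
  have "0 \<le> a + 2 * b * (- b / c) + c * (- b / c)\<^sup>2" by (rule nonneg)
  also have "\<dots> = a - b\<^sup>2 / c" using c_pos by (simp add: field_simps power2_eq_square)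
  finally show ?thesis using c_pos by (simp add: field_simps)
qed

lemma card_squared_le_sum_inverse_mult_sum:
  fixes a :: "'i \<Rightarrow> real"
  assumes pos: "\<And>k. k \<in> K \<Longrightarrow> 0 < a k"
  shows "(real (card K))\<^sup>2 \<le> (\<Sum>k\<in>K. 1 / a k) * (\<Sum>k\<in>K. a k)"
proof (rule nonneg_quadratic_discriminant)
  fix t :: real
  have square: "(1 / sqrt (a k) + t * sqrt (a k))\<^sup>2 = 1 / a k + 2 * t + a k * t\<^sup>2" if "k \<in> K" for k
    using pos[OF that] by (simp add: power2_eq_square field_simps)
  have "0 \<le> (\<Sum>k\<in>K. (1 / sqrt (a k) + t * sqrt (a k))\<^sup>2)" by (intro sum_nonneg) simp
  also have "\<dots> = (\<Sum>k\<in>K. 1 / a k + 2 * t + a k * t\<^sup>2)" using square by (rule sum.cong[OF refl])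
  also have "\<dots> = (\<Sum>k\<in>K. 1 / a k) + 2 * real (card K) * t + (\<Sum>k\<in>K. a k) * t\<^sup>2"
    by (simp add: sum.distrib sum_distrib_right)
  finally show "0 \<le> (\<Sum>k\<in>K. 1 / a k) + 2 * real (card K) * t + (\<Sum>k\<in>K. a k) * t\<^sup>2" .
next
  show "0 \<le> (\<Sum>k\<in>K. a k)" using pos by (intro sum_nonneg) (simp add: less_imp_le)
qed

lemma cubic_bound_from_potential_drop:
  fixes s n D R eps :: real
  assumes s: "0 \<le> s" and eps: "0 \<le> eps" "eps \<le> 1 / 100" and R: "0 \<le> R"
    and drop: "s\<^sup>2 * sqrt (1 - eps) \<le> 2 * n * D"
    and energy: "D\<^sup>2 \<le> R * ((1 + eps) * s)"
  shows "s ^ 3 \<le> 5 * n\<^sup>2 * R"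
proof (cases "s = 0")
  case False
  have "s ^ 4 * (1 - eps) = (s\<^sup>2 * sqrt (1 - eps))\<^sup>2"
    using eps by (simp add: power_mult_distrib flip: power_mult)
  also have "\<dots> \<le> (2 * n * D)\<^sup>2"
    using drop s eps by (intro power_mono) auto
  also have "\<dots> = 4 * n\<^sup>2 * D\<^sup>2" by (simp add: power_mult_distrib)
  also have "\<dots> \<le> 4 * n\<^sup>2 * (R * ((1 + eps) * s))" using energy by (simp add: mult_left_mono)
  finally have "s * (s ^ 3 * (1 - eps)) \<le> s * (4 * (1 + eps) * (n\<^sup>2 * R))"
    by (simp add: algebra_simps power_numeral_reduce)
  then have "s ^ 3 * (1 - eps) \<le> 4 * (1 + eps) * (n\<^sup>2 * R)" using s False by simp
  also have "\<dots> \<le> 5 * (1 - eps) * (n\<^sup>2 * R)"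
    using eps R by (intro mult_right_mono) auto
  finally have "(1 - eps) * s ^ 3 \<le> (1 - eps) * (5 * n\<^sup>2 * R)" by (simp add: algebra_simps)
  then show ?thesis using eps by simp
qed (use R in simp)

lemma mult_mat_vec_index_sum:
  "A \<in> carrier_mat m n \<Longrightarrow> x \<in> carrier_vec n \<Longrightarrow> i < m \<Longrightarrow> (A *\<^sub>v x) $ i = (\<Sum>j<n. A $$ (i, j) * x $ j)"
  by (auto simp: scalar_prod_def atLeast0LessThan intro!: sum.cong)

lemma mult_mat_vec_zero_right: "A \<in> carrier_mat m n \<Longrightarrow> A *\<^sub>v 0\<^sub>v n = (0\<^sub>v m :: real vec)"
  by (intro eq_vecI) (auto simp: row_def)

lemma add_eq_imp_eq_minus_mat:
  fixes A B C :: "real mat"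
  assumes A: "A \<in> carrier_mat n n" and B: "B \<in> carrier_mat n n" and eq: "A + B = C"
  shows "A = C - B"
proof (rule eq_matI)
  fix i j assume "i < dim_row (C - B)" "j < dim_col (C - B)"
  then have ij: "i < n" "j < n" using B by (auto simp flip: eq)
  show "A $$ (i, j) = (C - B) $$ (i, j)" using ij A B by (simp flip: eq)
qed (use A B eq in auto)

lemma minus_zero_mat: "(A :: real mat) \<in> carrier_mat n n \<Longrightarrow> A - 0\<^sub>m n n = A"
  by (rule eq_matI) auto

lemma quad_form_smult:
  fixes A :: "real mat"
  assumes A: "A \<in> carrier_mat n n" and x: "x \<in> carrier_vec n"
  shows "x \<bullet> ((k \<cdot>\<^sub>m A) *\<^sub>v x) = k * (x \<bullet> (A *\<^sub>v x))"
proof -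
  have "(k \<cdot>\<^sub>m A) *\<^sub>v x = k \<cdot>\<^sub>v (A *\<^sub>v x)"
    by (rule eq_vecI) (use A x in \<open>auto simp: row_smult scalar_prod_smult_left\<close>)
  then show ?thesis using A x by simp
qed

lemma psd_cauchy_schwarz:
  fixes A :: "real mat"
  assumes A: "A \<in> carrier_mat n n" and sym: "transpose_mat A = A"
    and psd: "\<And>z. z \<in> carrier_vec n \<Longrightarrow> 0 \<le> z \<bullet> (A *\<^sub>v z)"
    and x: "x \<in> carrier_vec n" and y: "y \<in> carrier_vec n"
  shows "(y \<bullet> (A *\<^sub>v x))\<^sup>2 \<le> (y \<bullet> (A *\<^sub>v y)) * (x \<bullet> (A *\<^sub>v x))"
proof -
  have Ax: "A *\<^sub>v x \<in> carrier_vec n" and Ay: "A *\<^sub>v y \<in> carrier_vec n" using A x y by auto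
  have swap: "x \<bullet> (A *\<^sub>v y) = y \<bullet> (A *\<^sub>v x)"
    using transpose_vec_mult_scalar[OF A y x] comm_scalar_prod[OF Ax y] sym by simp
  have expand: "(x + t \<cdot>\<^sub>v y) \<bullet> (A *\<^sub>v (x + t \<cdot>\<^sub>v y))
      = x \<bullet> (A *\<^sub>v x) + 2 * (y \<bullet> (A *\<^sub>v x)) * t + (y \<bullet> (A *\<^sub>v y)) * t\<^sup>2" for t
  proof -
    have "A *\<^sub>v (x + t \<cdot>\<^sub>v y) = A *\<^sub>v x + t \<cdot>\<^sub>v (A *\<^sub>v y)"
      using A x y by (simp add: mult_add_distrib_mat_vec mult_mat_vec)
    then show ?thesis
      using x y Ax Ay swap
      by (simp add: add_scalar_prod_distrib scalar_prod_add_distrib power2_eq_square algebra_simps)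
  qed
  have "(y \<bullet> (A *\<^sub>v x))\<^sup>2 \<le> x \<bullet> (A *\<^sub>v x) * (y \<bullet> (A *\<^sub>v y))"
    by (rule nonneg_quadratic_discriminant) (use psd x y expand in \<open>auto simp flip: expand\<close>)
  then show ?thesis by (simp add: mult.commute)
qed

lemma is_pinv_left_absorb:
  assumes A: "A \<in> carrier_mat n n" and P: "is_pinv n A P" and Q: "is_pinv n A Q"
  shows "P = P * A * Q"
proof -
  have Pc: "P \<in> carrier_mat n n" and PAP: "P * A * P = P" and AP: "transpose_mat (A * P) = A * P"
    using P unfolding is_pinv_def by auto
  have Qc: "Q \<in> carrier_mat n n" and AQA: "A * Q * A = A" and AQ: "transpose_mat (A * Q) = A * Q"
    using Q unfolding is_pinv_def by auto
  have AP_T: "A * P = transpose_mat P * transpose_mat A"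
    using AP transpose_mult[OF A Pc] by simp
  have At: "transpose_mat A = transpose_mat A * (A * Q)"
  proof -
    have "transpose_mat A = transpose_mat (A * Q * A)" using AQA by simp
    also have "\<dots> = transpose_mat A * transpose_mat (A * Q)"
      using A Qc by (simp add: transpose_mult[of _ n n _ n])
    finally show ?thesis using AQ by simp
  qed
  have "P = P * (A * P)" using PAP A Pc by (simp add: assoc_mult_mat[of P n n A n P n])
  also have "\<dots> = P * (transpose_mat P * transpose_mat A * (A * Q))"
    using AP_T At A Pc Qc by (simp add: assoc_mult_mat[of _ n n _ n _ n])
  also have "\<dots> = (P * A * P) * A * Q"
    using AP_T A Pc Qc by (simp add: assoc_mult_mat[of _ n n _ n _ n])
  finally show ?thesis using PAP by simp
qed

lemma is_pinv_right_absorb: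
  assumes A: "A \<in> carrier_mat n n" and P: "is_pinv n A P" and Q: "is_pinv n A Q"
  shows "Q = P * A * Q"
proof -
  have Pc: "P \<in> carrier_mat n n" and APA: "A * P * A = A" and PA: "transpose_mat (P * A) = P * A"
    using P unfolding is_pinv_def by auto
  have Qc: "Q \<in> carrier_mat n n" and QAQ: "Q * A * Q = Q" and QA: "transpose_mat (Q * A) = Q * A"
    using Q unfolding is_pinv_def by auto
  have QA_T: "Q * A = transpose_mat A * transpose_mat Q"
    using QA transpose_mult[OF Qc A] by simp
  have At: "transpose_mat A = (P * A) * transpose_mat A"
  proof -
    have "transpose_mat A = transpose_mat (A * P * A)" using APA by simp
    also have "\<dots> = transpose_mat A * (transpose_mat P * transpose_mat A)"
      using A Pc by (simp add: transpose_mult[of _ n n _ n] assoc_mult_mat[of _ n n _ n _ n])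
    also have "\<dots> = transpose_mat (P * A) * transpose_mat A"
      using A Pc by (simp add: transpose_mult[of _ n n _ n] assoc_mult_mat[of _ n n _ n _ n])
    finally show ?thesis using PA by simp
  qed
  have "Q = (Q * A) * Q" using QAQ by simp
  also have "\<dots> = ((P * A) * transpose_mat A * transpose_mat Q) * Q"
    using QA_T At by simp
  also have "\<dots> = P * A * (Q * A * Q)"
    using QA_T A Pc Qc by (simp add: assoc_mult_mat[of _ n n _ n _ n])
  finally show ?thesis using QAQ by simp
qed

lemma pinv_eqI:
  assumes A: "A \<in> carrier_mat n n" and P: "is_pinv n A P"
  shows "pinv n A = P"
  unfolding pinv_def
proof (rule the_equality[where P = "is_pinv n A", OF P])
  show "Q = P" if "is_pinv n A Q" for Q
    using is_pinv_left_absorb[OF A P that] is_pinv_right_absorb[OF A P that] by simp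
qed

section \<open>Laplacians and effective resistance\<close>

lemma simple_graph_finite: "simple_graph n E \<Longrightarrow> finite E"
  unfolding simple_graph_def by (rule finite_subset[of _ "Pow {0..<n}"]) auto

lemma simple_graph_edgeE:
  assumes "simple_graph n E" and "e \<in> E"
  obtains a b where "a \<noteq> b" "a < n" "b < n" "e = {a, b}"
  using assms unfolding simple_graph_def card_2_iff by fastforce

lemma simple_graph_subset: "simple_graph n E \<Longrightarrow> F \<subseteq> E \<Longrightarrow> simple_graph n F"
  unfolding simple_graph_def by blast

definition edge_form :: "nat set \<Rightarrow> real vec \<Rightarrow> real vec \<Rightarrow> real" where
  "edge_form e y x = (\<Sum>i\<in>e. \<Sum>j\<in>e. y $ i * (if i = j then 1 else -1) * x $ j)"

lemma edge_form_doubleton: "a \<noteq> b \<Longrightarrow> edge_form {a, b} y x = (y $ a - y $ b) * (x $ a - x $ b)"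
  by (simp add: edge_form_def algebra_simps)

lemma laplacian_carrier [simp]: "laplacian n E w \<in> carrier_mat n n"
  by (simp add: laplacian_def)

lemma laplacian_dim [simp]: "dim_row (laplacian n E w) = n" "dim_col (laplacian n E w) = n"
  by (simp_all add: laplacian_def)

lemma laplacian_index:
  "i < n \<Longrightarrow> j < n \<Longrightarrow> laplacian n E w $$ (i, j) =
     (\<Sum>e\<in>E. w e * (if i \<in> e \<and> j \<in> e then (if i = j then 1 else -1) else 0))"
  by (simp add: laplacian_def edge_mat_def)

lemma laplacian_symmetric: "transpose_mat (laplacian n E w) = laplacian n E w"
  by (rule eq_matI) (auto simp: laplacian_index conj_commute eq_commute)

lemma laplacian_bilinear_form:
  assumes E: "simple_graph n E" and x: "x \<in> carrier_vec n" and y: "y \<in> carrier_vec n"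
  shows "y \<bullet> (laplacian n E w *\<^sub>v x) = (\<Sum>e\<in>E. w e * edge_form e y x)"
proof -
  let ?t = "\<lambda>e i j. if i \<in> e \<and> j \<in> e then y $ i * (if i = j then 1 else -1) * x $ j else 0"
  have "y \<bullet> (laplacian n E w *\<^sub>v x) = (\<Sum>i<n. y $ i * (laplacian n E w *\<^sub>v x) $ i)"
    using y by (simp add: scalar_prod_def atLeast0LessThan)
  also have "\<dots> = (\<Sum>i<n. y $ i * (\<Sum>j<n. laplacian n E w $$ (i, j) * x $ j))"
    by (intro sum.cong refl arg_cong2[where f = "(*)"] mult_mat_vec_index_sum[OF laplacian_carrier x]) simp
  also have "\<dots> = (\<Sum>i<n. \<Sum>j<n. \<Sum>e\<in>E. w e * ?t e i j)"
    by (intro sum.cong refl) (auto simp: laplacian_index sum_distrib_left sum_distrib_right intro!: sum.cong)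
  also have "\<dots> = (\<Sum>e\<in>E. w e * (\<Sum>i<n. \<Sum>j<n. ?t e i j))"
    by (simp add: sum_distrib_left sum.swap[of _ E])
  also have "\<dots> = (\<Sum>e\<in>E. w e * edge_form e y x)"
  proof (intro sum.cong refl arg_cong2[where f = "(*)"])
    fix e assume "e \<in> E"
    then have e: "e \<subseteq> {..<n}" using E unfolding simple_graph_def atLeast0LessThan by blast
    have "(\<Sum>i<n. \<Sum>j<n. ?t e i j)
        = (\<Sum>i<n. if i \<in> e then (\<Sum>j<n. if j \<in> e then y $ i * (if i = j then 1 else -1) * x $ j else 0) else 0)"
      by (intro sum.cong) auto
    also have "\<dots> = edge_form e y x"
      using e by (simp add: sum_if_mem_subset edge_form_def)
    finally show "(\<Sum>i<n. \<Sum>j<n. ?t e i j) = edge_form e y x" .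
  qed
  finally show ?thesis .
qed

lemma laplacian_quad_form_nonneg:
  assumes E: "simple_graph n E" and w: "\<And>e. e \<in> E \<Longrightarrow> 0 \<le> w e" and x: "x \<in> carrier_vec n"
  shows "0 \<le> x \<bullet> (laplacian n E w *\<^sub>v x)"
  unfolding laplacian_bilinear_form[OF E x x]
proof (intro sum_nonneg)
  fix e assume e: "e \<in> E"
  with E obtain a b where "a \<noteq> b" "e = {a, b}" by (rule simple_graph_edgeE)
  then show "0 \<le> w e * edge_form e x x" using w[OF e] by (simp add: edge_form_doubleton)
qed

lemma laplacian_mult_edge_constant:
  assumes E: "simple_graph n E" and z: "z \<in> carrier_vec n"
    and const: "\<And>a b. {a, b} \<in> E \<Longrightarrow> z $ a = z $ b"
  shows "laplacian n E w *\<^sub>v z = 0\<^sub>v n"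
proof (rule eq_vecI)
  fix i assume "i < dim_vec (0\<^sub>v n :: real vec)"
  then have i: "i < n" by simp
  have "(laplacian n E w *\<^sub>v z) $ i = unit_vec n i \<bullet> (laplacian n E w *\<^sub>v z)"
    using scalar_prod_left_unit[OF mult_mat_vec_carrier[OF laplacian_carrier z] i] by simp
  also have "\<dots> = (\<Sum>e\<in>E. w e * edge_form e (unit_vec n i) z)"
    by (rule laplacian_bilinear_form[OF E z unit_vec_carrier])
  also have "\<dots> = 0"
  proof (intro sum.neutral ballI)
    fix e assume e: "e \<in> E"
    with E obtain a b where "a \<noteq> b" "e = {a, b}" by (rule simple_graph_edgeE)
    then show "w e * edge_form e (unit_vec n i) z = 0" using const e by (simp add: edge_form_doubleton)
  qed
  finally show "(laplacian n E w *\<^sub>v z) $ i = 0\<^sub>v n $ i" using i by simp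
qed simp

lemma laplacian_quad_form_zero_imp_edge_constant:
  assumes E: "simple_graph n E" and w: "\<And>e. e \<in> E \<Longrightarrow> 0 < w e" and z: "z \<in> carrier_vec n"
    and zero: "z \<bullet> (laplacian n E w *\<^sub>v z) = 0" and ab: "{a, b} \<in> E"
  shows "z $ a = z $ b"
proof (cases "a = b")
  case False
  have nonneg: "0 \<le> w e * edge_form e z z" if e: "e \<in> E" for e
  proof -
    from E e obtain c d where "c \<noteq> d" "e = {c, d}" by (rule simple_graph_edgeE)
    then show ?thesis using w[OF e] by (simp add: edge_form_doubleton)
  qed
  have "(\<Sum>e\<in>E. w e * edge_form e z z) = 0"
    using zero unfolding laplacian_bilinear_form[OF E z z] .
  then have "w {a, b} * edge_form {a, b} z z = 0"
    using sum_nonneg_eq_0_iff[OF simple_graph_finite[OF E] nonneg] ab by simp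
  then show ?thesis using w[OF ab] False by (simp add: edge_form_doubleton)
qed simp

definition reach :: "nat set set \<Rightarrow> nat \<Rightarrow> nat \<Rightarrow> bool" where
  "reach E = (\<lambda>a b. {a, b} \<in> E)\<^sup>*\<^sup>*"

lemma reach_refl [simp]: "reach E i i"
  by (simp add: reach_def)

lemma reach_edge: "{a, b} \<in> E \<Longrightarrow> reach E a b"
  unfolding reach_def by (rule r_into_rtranclp)

lemma reach_trans: "reach E i j \<Longrightarrow> reach E j k \<Longrightarrow> reach E i k"
  unfolding reach_def by (rule rtranclp_trans)

lemma reach_sym: "reach E i j \<Longrightarrow> reach E j i"
  unfolding reach_def by (rule sympD[OF symp_rtranclp]) (auto intro: sympI simp: insert_commute)

lemma reach_left_cong: "reach E i j \<Longrightarrow> reach E i k \<longleftrightarrow> reach E j k"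
  by (metis reach_sym reach_trans)

lemma reach_right_cong: "reach E j k \<Longrightarrow> reach E i j \<longleftrightarrow> reach E i k"
  by (metis reach_sym reach_trans)

lemma reach_mono: "reach E i j \<Longrightarrow> E \<subseteq> F \<Longrightarrow> reach F i j"
  unfolding reach_def by (erule rtranclp_mono[THEN predicate2D, rotated]) auto

lemma reach_edge_constant:
  assumes const: "\<And>a b. {a, b} \<in> E \<Longrightarrow> z a = z b" and "reach E i j"
  shows "z i = z j"
  using assms(2) unfolding reach_def by induction (auto dest: const)

lemma walk_len_imp_reach:
  assumes "walk_len E i j l"
  shows "reach E i j"
proof -
  obtain p where p: "p 0 = i" "p l = j" "\<And>t. t < l \<Longrightarrow> {p t, p (Suc t)} \<in> E"
    using assms unfolding walk_len_def by blast
  have "reach E i (p t)" if "t \<le> l" for t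
    using that
  proof (induction t)
    case (Suc t)
    then have "reach E i (p t)" by simp
    moreover have "{p t, p (Suc t)} \<in> E" using Suc.prems p(3) by simp
    ultimately show ?case using reach_trans reach_edge by metis
  qed (simp add: p(1))
  then show ?thesis using p(2) by blast
qed

definition component :: "nat \<Rightarrow> nat set set \<Rightarrow> nat \<Rightarrow> nat set" where
  "component n E i = {j. j < n \<and> reach E i j}"

lemma component_eq:
  assumes "reach E i j"
  shows "component n E i = component n E j"
  unfolding component_def using reach_left_cong[OF assms] by simp

lemma component_subset: "component n E i \<subseteq> {..<n}"
  by (auto simp: component_def)

lemma card_component_pos: "i < n \<Longrightarrow> 0 < card (component n E i)"
  by (subst card_gt_0_iff) (auto simp: component_def)

definition component_avg :: "nat \<Rightarrow> nat set set \<Rightarrow> real mat" where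
  "component_avg n E = mat n n (\<lambda>(i, j). if reach E i j then 1 / real (card (component n E i)) else 0)"

lemma component_avg_carrier [simp]: "component_avg n E \<in> carrier_mat n n"
  by (simp add: component_avg_def)

lemma component_avg_dim [simp]: "dim_row (component_avg n E) = n" "dim_col (component_avg n E) = n"
  by (simp_all add: component_avg_def)

lemma component_avg_index:
  "i < n \<Longrightarrow> j < n \<Longrightarrow>
     component_avg n E $$ (i, j) = (if reach E i j then 1 / real (card (component n E i)) else 0)"
  by (simp add: component_avg_def)

lemma component_avg_symmetric: "transpose_mat (component_avg n E) = component_avg n E"
proof (rule eq_matI)
  fix i j assume ij: "i < dim_row (component_avg n E)" "j < dim_col (component_avg n E)"
  have "reach E j i \<longleftrightarrow> reach E i j" using reach_sym by metis
  then show "transpose_mat (component_avg n E) $$ (i, j) = component_avg n E $$ (i, j)"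
    using ij component_eq[of E i j n] by (auto simp: component_avg_index)
qed auto

lemma component_avg_mult_vec_index:
  assumes z: "z \<in> carrier_vec n" and i: "i < n"
  shows "(component_avg n E *\<^sub>v z) $ i = (\<Sum>k\<in>component n E i. z $ k) / real (card (component n E i))"
proof -
  have "(component_avg n E *\<^sub>v z) $ i = (\<Sum>k<n. component_avg n E $$ (i, k) * z $ k)"
    by (rule mult_mat_vec_index_sum[OF component_avg_carrier z i])
  also have "\<dots> = (\<Sum>k<n. if k \<in> component n E i then z $ k / real (card (component n E i)) else 0)"
    using i by (intro sum.cong refl) (simp add: component_avg_index component_def)
  also have "\<dots> = (\<Sum>k\<in>component n E i. z $ k) / real (card (component n E i))"
    by (simp add: sum_if_mem_subset[OF _ component_subset] sum_divide_distrib)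
  finally show ?thesis .
qed

lemma component_avg_mult_component_constant:
  assumes z: "z \<in> carrier_vec n"
    and const: "\<And>i j. i < n \<Longrightarrow> j < n \<Longrightarrow> reach E i j \<Longrightarrow> z $ j = z $ i"
  shows "component_avg n E *\<^sub>v z = z"
proof (rule eq_vecI)
  fix i assume "i < dim_vec z"
  then have i: "i < n" using z by simp
  have "(\<Sum>k\<in>component n E i. z $ k) = real (card (component n E i)) * z $ i"
    using const[OF i] by (simp add: component_def)
  then show "(component_avg n E *\<^sub>v z) $ i = z $ i"
    using card_component_pos[OF i] by (simp add: component_avg_mult_vec_index[OF z i])
qed (use z in simp)

lemma component_avg_idempotent: "component_avg n E * component_avg n E = component_avg n E"
proof (rule eq_matI)
  fix i j assume "i < dim_row (component_avg n E)" "j < dim_col (component_avg n E)"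
  then have i: "i < n" and j: "j < n" by auto
  have col: "col (component_avg n E) j \<in> carrier_vec n" by (simp add: carrier_dim_vec)
  have const: "col (component_avg n E) j $ k = col (component_avg n E) j $ i"
    if "i < n" "k < n" "reach E i k" for i k
  proof -
    have "reach E k j \<longleftrightarrow> reach E i j" using reach_left_cong[OF that(3)] by simp
    then show ?thesis using that j component_eq[OF that(3)] by (simp add: component_avg_index)
  qed
  have "component_avg n E *\<^sub>v col (component_avg n E) j = col (component_avg n E) j"
    by (rule component_avg_mult_component_constant[OF col const])
  then have "(component_avg n E *\<^sub>v col (component_avg n E) j) $ i = col (component_avg n E) j $ i"
    by simp
  then show "(component_avg n E * component_avg n E) $$ (i, j) = component_avg n E $$ (i, j)"
    using i j by simp
qed auto

lemma bvec_carrier [simp]: "bvec n u v \<in> carrier_vec n"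
  by (simp add: bvec_def chi_def)

lemma scalar_prod_bvec:
  assumes u: "u < n" and v: "v < n" and x: "x \<in> carrier_vec n"
  shows "bvec n u v \<bullet> x = x $ u - x $ v"
proof -
  have "bvec n u v \<bullet> x = (\<Sum>k<n. (if k = u then x $ k else 0) - (if k = v then x $ k else 0))"
    unfolding scalar_prod_def using x by (intro sum.cong) (auto simp: bvec_def chi_def)
  also have "\<dots> = x $ u - x $ v" using u v by (simp add: sum_subtractf sum.delta)
  finally show ?thesis .
qed

lemma component_avg_bvec:
  assumes u: "u < n" and v: "v < n" and uv: "reach E u v"
  shows "component_avg n E *\<^sub>v bvec n u v = 0\<^sub>v n"
proof (rule eq_vecI)
  fix i assume "i < dim_vec (0\<^sub>v n :: real vec)"
  then have i: "i < n" by simp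
  let ?C = "component n E i"
  have "(\<Sum>k\<in>?C. bvec n u v $ k) = (\<Sum>k\<in>?C. (if k = u then 1 else 0) - (if k = v then 1 else 0))"
    using component_subset[of n E i] by (intro sum.cong refl) (auto simp: bvec_def chi_def)
  also have "\<dots> = (if u \<in> ?C then 1 else 0) - (if v \<in> ?C then 1 else 0)"
    using finite_subset[OF component_subset] by (simp add: sum_subtractf sum.delta)
  also have "\<dots> = 0"
  proof -
    have "reach E i u \<longleftrightarrow> reach E i v" by (rule reach_right_cong[OF uv])
    then show ?thesis using u v by (simp add: component_def)
  qed
  finally show "(component_avg n E *\<^sub>v bvec n u v) $ i = 0\<^sub>v n $ i"
    unfolding component_avg_mult_vec_index[OF bvec_carrier i] using i by simp
qed (simp add: component_avg_def)

context
  fixes n :: nat and E :: "nat set set" and w :: "nat set \<Rightarrow> real"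
  assumes E: "simple_graph n E" and w: "\<And>e. e \<in> E \<Longrightarrow> 0 < w e"
begin

lemma laplacian_psd: "x \<in> carrier_vec n \<Longrightarrow> 0 \<le> x \<bullet> (laplacian n E w *\<^sub>v x)"
  by (rule laplacian_quad_form_nonneg[OF E]) (simp_all add: w less_imp_le)

lemma laplacian_mult_component_avg: "laplacian n E w * component_avg n E = 0\<^sub>m n n"
proof (rule eq_matI)
  fix i j assume "i < dim_row (0\<^sub>m n n :: real mat)" "j < dim_col (0\<^sub>m n n :: real mat)"
  then have i: "i < n" and j: "j < n" by auto
  have col: "col (component_avg n E) j \<in> carrier_vec n" by (simp add: carrier_dim_vec)
  have const: "col (component_avg n E) j $ a = col (component_avg n E) j $ b" if ab: "{a, b} \<in> E" for a b
  proof -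
    have "a < n" "b < n" using E ab unfolding simple_graph_def by auto
    moreover have "reach E a j \<longleftrightarrow> reach E b j" by (rule reach_left_cong[OF reach_edge[OF ab]])
    ultimately show ?thesis using j component_eq[OF reach_edge[OF ab], of n] by (simp add: component_avg_index)
  qed
  have "laplacian n E w *\<^sub>v col (component_avg n E) j = 0\<^sub>v n"
    by (rule laplacian_mult_edge_constant[OF E col const])
  then have "(laplacian n E w *\<^sub>v col (component_avg n E) j) $ i = 0"
    using i by simp
  then show "(laplacian n E w * component_avg n E) $$ (i, j) = 0\<^sub>m n n $$ (i, j)"
    using i j by simp
qed auto

lemma component_avg_mult_laplacian: "component_avg n E * laplacian n E w = 0\<^sub>m n n"
proof -
  have "transpose_mat (component_avg n E * laplacian n E w) = 0\<^sub>m n n"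
    using transpose_mult[OF component_avg_carrier laplacian_carrier] laplacian_mult_component_avg
    by (simp add: laplacian_symmetric component_avg_symmetric)
  then show ?thesis by (metis transpose_transpose zero_transpose_mat)
qed

lemma laplacian_plus_component_avg_kernel:
  assumes z: "z \<in> carrier_vec n" and Az: "(laplacian n E w + component_avg n E) *\<^sub>v z = 0\<^sub>v n"
  shows "z = 0\<^sub>v n"
proof -
  let ?L = "laplacian n E w" and ?P = "component_avg n E"
  have PA: "?P * (?L + ?P) = ?P"
    using mult_add_distrib_mat[OF component_avg_carrier laplacian_carrier component_avg_carrier]
    by (simp add: component_avg_mult_laplacian component_avg_idempotent)
  have "?P *\<^sub>v z = (?P * (?L + ?P)) *\<^sub>v z" by (simp only: PA)
  also have "\<dots> = ?P *\<^sub>v ((?L + ?P) *\<^sub>v z)" using z by (simp add: assoc_mult_mat_vec[of _ n n _ n])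
  finally have Pz: "?P *\<^sub>v z = 0\<^sub>v n" using Az by (simp add: mult_mat_vec_zero_right)
  have "?L *\<^sub>v z = 0\<^sub>v n"
    using Az Pz add_mult_distrib_mat_vec[OF laplacian_carrier component_avg_carrier z]
      right_zero_vec[OF mult_mat_vec_carrier[OF laplacian_carrier z]] by simp
  then have zero: "z \<bullet> (?L *\<^sub>v z) = 0" using z by simp
  have edge_const: "z $ a = z $ b" if "{a, b} \<in> E" for a b
    by (rule laplacian_quad_form_zero_imp_edge_constant[OF E w z zero that])
  have "?P *\<^sub>v z = z"
  proof (rule component_avg_mult_component_constant[OF z])
    fix i j assume "reach E i j"
    from reach_edge_constant[of E "\<lambda>k. z $ k", OF edge_const this] show "z $ j = z $ i" by simp
  qed
  then show ?thesis using Pz by simp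
qed

lemma laplacian_plus_component_avg_invertible:
  obtains Q where "Q \<in> carrier_mat n n"
    "Q * (laplacian n E w + component_avg n E) = 1\<^sub>m n"
    "(laplacian n E w + component_avg n E) * Q = 1\<^sub>m n"
proof -
  let ?A = "laplacian n E w + component_avg n E"
  have A: "?A \<in> carrier_mat n n" by simp
  have "det ?A \<noteq> 0"
  proof
    assume "det ?A = 0"
    then obtain z where "z \<in> carrier_vec n" "z \<noteq> 0\<^sub>v n" "?A *\<^sub>v z = 0\<^sub>v n"
      using det_0_iff_vec_prod_zero_field[OF A] by blast
    then show False using laplacian_plus_component_avg_kernel by blast
  qed
  from det_non_zero_imp_unit[OF A this, of "()"]
  have "\<exists>Q\<in>carrier_mat n n. Q * ?A = 1\<^sub>m n \<and> ?A * Q = 1\<^sub>m n"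
    unfolding Units_def ring_mat_def by auto
  then show ?thesis using that by blast
qed

lemma laplacian_mult_inverse:
  assumes Q: "Q \<in> carrier_mat n n"
    and QA: "Q * (laplacian n E w + component_avg n E) = 1\<^sub>m n"
    and AQ: "(laplacian n E w + component_avg n E) * Q = 1\<^sub>m n"
  shows "laplacian n E w * Q = 1\<^sub>m n - component_avg n E"
    and "Q * laplacian n E w = 1\<^sub>m n - component_avg n E"
    and "component_avg n E * Q = component_avg n E"
proof -
  let ?L = "laplacian n E w" and ?P = "component_avg n E"
  have L: "?L \<in> carrier_mat n n" and P: "?P \<in> carrier_mat n n" by simp_all
  have "?P * Q = (?P * (?L + ?P)) * Q"
    using mult_add_distrib_mat[OF P L P] P
    by (simp add: component_avg_mult_laplacian component_avg_idempotent)
  also have "\<dots> = ?P" using AQ P L Q by (simp add: assoc_mult_mat[of _ n n _ n _ n])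
  finally show PQ: "?P * Q = ?P" .
  have "Q * ?P = Q * ((?L + ?P) * ?P)"
    using add_mult_distrib_mat[OF L P P] P
    by (simp add: laplacian_mult_component_avg component_avg_idempotent)
  also have "\<dots> = ?P" using QA P L Q by (simp flip: assoc_mult_mat[of _ n n _ n _ n])
  finally have QP: "Q * ?P = ?P" .
  show "?L * Q = 1\<^sub>m n - ?P"
    using AQ PQ add_mult_distrib_mat[OF L P Q] by (intro add_eq_imp_eq_minus_mat[of _ n]) (use L Q in auto)
  show "Q * ?L = 1\<^sub>m n - ?P"
    using QA QP mult_add_distrib_mat[OF Q L P] by (intro add_eq_imp_eq_minus_mat[of _ n]) (use L Q in auto)
qed

text \<open>The pseudoinverse of a Laplacian L is inverse (L + P) - P, where P is the orthogonal
  projection onto the kernel of L, the functions constant on connected components.\<close>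

lemma pinv_laplacian:
  shows "pinv n (laplacian n E w) \<in> carrier_mat n n"
    and "laplacian n E w * pinv n (laplacian n E w) = 1\<^sub>m n - component_avg n E"
proof -
  let ?L = "laplacian n E w" and ?P = "component_avg n E"
  obtain Q where Q: "Q \<in> carrier_mat n n" and QA: "Q * (?L + ?P) = 1\<^sub>m n" and AQ: "(?L + ?P) * Q = 1\<^sub>m n"
    by (rule laplacian_plus_component_avg_invertible)
  note inverse = laplacian_mult_inverse[OF Q QA AQ]
  have L: "?L \<in> carrier_mat n n" and P: "?P \<in> carrier_mat n n" by simp_all
  define R where "R = Q - ?P"
  have R: "R \<in> carrier_mat n n" unfolding R_def by (rule minus_carrier_mat[OF P])
  have LR: "?L * R = 1\<^sub>m n - ?P"
    unfolding R_def using mult_minus_distrib_mat[OF L Q P] inverse(1) laplacian_mult_component_avg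
      minus_zero_mat[OF minus_carrier_mat[OF P]] by simp
  have RL: "R * ?L = 1\<^sub>m n - ?P"
    unfolding R_def using minus_mult_distrib_mat[OF Q P L] inverse(2) component_avg_mult_laplacian
      minus_zero_mat[OF minus_carrier_mat[OF P]] by simp
  have PR: "?P * R = 0\<^sub>m n n"
    unfolding R_def using mult_minus_distrib_mat[OF P Q P] inverse(3) component_avg_idempotent
    by (intro eq_matI) auto
  have "?L * R * ?L = ?L"
    using LR minus_mult_distrib_mat[OF one_carrier_mat P L] component_avg_mult_laplacian
      minus_zero_mat[OF L] by simp
  moreover have "R * ?L * R = R"
    using RL minus_mult_distrib_mat[OF one_carrier_mat P R] PR minus_zero_mat[OF R] left_mult_one_mat[OF R]
    by simp
  moreover have "transpose_mat (1\<^sub>m n - ?P) = 1\<^sub>m n - ?P"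
    using transpose_minus[OF one_carrier_mat P] component_avg_symmetric by simp
  ultimately have "is_pinv n ?L R"
    unfolding is_pinv_def using R LR RL by simp
  then have "pinv n ?L = R" by (rule pinv_eqI[OF L])
  then show "pinv n ?L \<in> carrier_mat n n" "?L * pinv n ?L = 1\<^sub>m n - ?P" using R LR by simp_all
qed

context
  fixes u v :: nat
  assumes u: "u < n" and v: "v < n" and uv: "reach E u v"
begin

text \<open>L (pinv L b) = b because b = bvec n u v is orthogonal to the kernel of L when u and v
  are connected.\<close>

lemma eff_res_eq_energy:
  obtains y where "y \<in> carrier_vec n" "laplacian n E w *\<^sub>v y = bvec n u v"
    "eff_res n (laplacian n E w) u v = y \<bullet> (laplacian n E w *\<^sub>v y)"
proof
  let ?L = "laplacian n E w" and ?b = "bvec n u v"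
  have P: "pinv n ?L \<in> carrier_mat n n" and LP: "?L * pinv n ?L = 1\<^sub>m n - component_avg n E"
    using pinv_laplacian by blast+
  show y: "pinv n ?L *\<^sub>v ?b \<in> carrier_vec n" using P by simp
  have "?L *\<^sub>v (pinv n ?L *\<^sub>v ?b) = (1\<^sub>m n - component_avg n E) *\<^sub>v ?b"
    using P by (simp flip: LP add: assoc_mult_mat_vec[of _ n n _ n])
  also have "\<dots> = ?b"
    using minus_mult_distrib_mat_vec[OF one_carrier_mat component_avg_carrier bvec_carrier]
      component_avg_bvec[OF u v uv] by simp
  finally show Ly: "?L *\<^sub>v (pinv n ?L *\<^sub>v ?b) = ?b" .
  show "eff_res n ?L u v = (pinv n ?L *\<^sub>v ?b) \<bullet> (?L *\<^sub>v (pinv n ?L *\<^sub>v ?b))"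
    unfolding eff_res_def Ly using comm_scalar_prod[OF bvec_carrier y] by simp
qed

lemma eff_res_nonneg: "0 \<le> eff_res n (laplacian n E w) u v"
proof -
  obtain y where "y \<in> carrier_vec n" "eff_res n (laplacian n E w) u v = y \<bullet> (laplacian n E w *\<^sub>v y)"
    by (rule eff_res_eq_energy)
  then show ?thesis using laplacian_psd by simp
qed

lemma eff_res_lower_bound:
  assumes x: "x \<in> carrier_vec n"
  shows "(x $ u - x $ v)\<^sup>2 \<le> eff_res n (laplacian n E w) u v * (x \<bullet> (laplacian n E w *\<^sub>v x))"
proof -
  let ?L = "laplacian n E w"
  obtain y where y: "y \<in> carrier_vec n" and Ly: "?L *\<^sub>v y = bvec n u v"
    and R: "eff_res n ?L u v = y \<bullet> (?L *\<^sub>v y)"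
    by (rule eff_res_eq_energy)
  have "x $ u - x $ v = (transpose_mat ?L *\<^sub>v y) \<bullet> x"
    unfolding laplacian_symmetric Ly by (rule scalar_prod_bvec[OF u v x, symmetric])
  also have "\<dots> = y \<bullet> (?L *\<^sub>v x)" by (rule transpose_vec_mult_scalar[OF laplacian_carrier x y])
  finally have "(x $ u - x $ v)\<^sup>2 = (y \<bullet> (?L *\<^sub>v x))\<^sup>2" by simp
  also have "\<dots> \<le> (y \<bullet> (?L *\<^sub>v y)) * (x \<bullet> (?L *\<^sub>v x))"
    by (rule psd_cauchy_schwarz[OF laplacian_carrier laplacian_symmetric laplacian_psd x y])
  finally show ?thesis unfolding R .
qed

end

end

section \<open>Potentials constant on layers\<close>

locale sparsifier =
  fixes n :: nat and E EH :: "nat set set" and w :: "nat set \<Rightarrow> real" and eps :: real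
  assumes simple_graph_E: "simple_graph n E"
    and sparsifier: "spectral_sparsifier n eps E EH w"
    and eps_pos: "0 < eps" and eps_le: "eps \<le> 1 / 100"
      \<comment> \<open>small enough for 64 eps \<le> 1 - eps and 4 (1 + eps) \<le> 5 (1 - eps)\<close>
begin

lemma EH_subset: "EH \<subseteq> E"
  using sparsifier unfolding spectral_sparsifier_def by blast

lemma weight_pos: "e \<in> EH \<Longrightarrow> 0 < w e"
  using sparsifier unfolding spectral_sparsifier_def by blast

lemma simple_graph_EH: "simple_graph n EH"
  using simple_graph_subset[OF simple_graph_E EH_subset] .

lemma quad_form_lower:
  "x \<in> carrier_vec n \<Longrightarrow> (1 - eps) * (x \<bullet> (laplacian n EH w *\<^sub>v x)) \<le> x \<bullet> (ulaplacian n E *\<^sub>v x)"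
  using sparsifier quad_form_smult[OF laplacian_carrier, of x n "1 - eps" EH w]
  unfolding spectral_sparsifier_def loewner_le_def by auto

lemma quad_form_upper:
  "x \<in> carrier_vec n \<Longrightarrow> x \<bullet> (ulaplacian n E *\<^sub>v x) \<le> (1 + eps) * (x \<bullet> (laplacian n EH w *\<^sub>v x))"
  using sparsifier quad_form_smult[OF laplacian_carrier, of x n "1 + eps" EH w]
  unfolding spectral_sparsifier_def loewner_le_def by auto

end

locale layered_sparsifier = sparsifier +
  fixes level :: "nat \<Rightarrow> nat" and s :: nat
  assumes level_le: "level i \<le> s"
    and level_edge: "{a, b} \<in> EH \<Longrightarrow> level b \<le> level a + 1"
begin

definition crosses :: "nat set \<Rightarrow> nat \<Rightarrow> bool" where
  "crosses e k \<longleftrightarrow> (\<exists>a\<in>e. \<exists>b\<in>e. level a \<le> k \<and> k < level b)"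

lemma crosses_doubleton:
  "crosses {a, b} k \<longleftrightarrow> (level a \<le> k \<and> k < level b) \<or> (level b \<le> k \<and> k < level a)"
  unfolding crosses_def by auto

lemma crosses_less: "crosses e k \<Longrightarrow> k < s"
  unfolding crosses_def using level_le less_le_trans by blast

lemma crosses_unique:
  assumes e: "e \<in> EH" and "crosses e k" and "crosses e j"
  shows "k = j"
proof -
  from simple_graph_EH e obtain a b where ab: "e = {a, b}" by (rule simple_graph_edgeE)
  have "level b \<le> level a + 1" "level a \<le> level b + 1"
    using level_edge e ab by (auto simp: insert_commute)
  moreover have "crosses {a, b} k" "crosses {a, b} j" using assms(2,3) ab by simp_all
  ultimately show ?thesis unfolding crosses_doubleton by linarith
qed

definition potential :: "(nat \<Rightarrow> real) \<Rightarrow> real vec" where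
  "potential \<delta> = vec n (\<lambda>i. \<Sum>k<level i. \<delta> k)"

lemma potential_carrier [simp]: "potential \<delta> \<in> carrier_vec n"
  by (simp add: potential_def)

lemma potential_index: "i < n \<Longrightarrow> potential \<delta> $ i = (\<Sum>k<s. if k < level i then \<delta> k else 0)"
  by (simp add: potential_def sum_lessThan_if_less[OF level_le])

lemma potential_diff_power2:
  assumes a: "a < n" and b: "b < n"
  shows "(potential \<delta> $ a - potential \<delta> $ b)\<^sup>2 = (\<Sum>k<s. if crosses {a, b} k then \<delta> k else 0)\<^sup>2"
proof -
  have "\<bar>potential \<delta> $ a - potential \<delta> $ b\<bar>
      = \<bar>\<Sum>k<s. (if k < level a then \<delta> k else 0) - (if k < level b then \<delta> k else 0)\<bar>"
    using a b by (simp add: potential_index sum_subtractf)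
  also have "\<dots> = \<bar>\<Sum>k<s. if crosses {a, b} k then \<delta> k else 0\<bar>"
  proof (cases "level b \<le> level a")
    case True
    then show ?thesis by (auto simp: crosses_doubleton intro!: arg_cong[where f = abs] sum.cong)
  next
    case False
    then have "(\<Sum>k<s. (if k < level a then \<delta> k else 0) - (if k < level b then \<delta> k else 0))
        = - (\<Sum>k<s. if crosses {a, b} k then \<delta> k else 0)"
      by (auto simp: crosses_doubleton sum_negf[symmetric] intro!: sum.cong)
    then show ?thesis by simp
  qed
  finally show ?thesis by (metis power2_abs)
qed

lemma quad_form_potential:
  assumes F: "simple_graph n F"
  shows "potential \<delta> \<bullet> (laplacian n F c *\<^sub>v potential \<delta>)
    = (\<Sum>e\<in>F. c e * (\<Sum>k<s. if crosses e k then \<delta> k else 0)\<^sup>2)"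
  unfolding laplacian_bilinear_form[OF F potential_carrier potential_carrier]
proof (intro sum.cong refl arg_cong2[where f = "(*)"])
  fix e assume "e \<in> F"
  with F obtain a b where "a \<noteq> b" "a < n" "b < n" "e = {a, b}" by (rule simple_graph_edgeE)
  then show "edge_form e (potential \<delta>) (potential \<delta>) = (\<Sum>k<s. if crosses e k then \<delta> k else 0)\<^sup>2"
    using potential_diff_power2 by (simp add: edge_form_doubleton power2_eq_square)
qed

definition cut_weight :: "nat \<Rightarrow> real" where
  "cut_weight k = (\<Sum>e\<in>EH. if crosses e k then w e else 0)"

definition cut_size :: "nat \<Rightarrow> real" where
  "cut_size k = real (card {e\<in>E. crosses e k})"

definition double_cut_size :: "nat \<Rightarrow> real" where
  "double_cut_size k = real (card {e\<in>E. crosses e k \<and> crosses e (Suc k)})"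

definition layer :: "nat \<Rightarrow> nat set" where
  "layer j = {i. i < n \<and> level i = j}"

lemma cut_size_nonneg: "0 \<le> cut_size k" and double_cut_size_nonneg: "0 \<le> double_cut_size k"
  by (simp_all add: cut_size_def double_cut_size_def)

lemma quad_form_potential_EH:
  "potential \<delta> \<bullet> (laplacian n EH w *\<^sub>v potential \<delta>) = (\<Sum>k<s. (\<delta> k)\<^sup>2 * cut_weight k)"
proof -
  have "potential \<delta> \<bullet> (laplacian n EH w *\<^sub>v potential \<delta>)
      = (\<Sum>e\<in>EH. w e * (\<Sum>k<s. if crosses e k then (\<delta> k)\<^sup>2 else 0))"
    unfolding quad_form_potential[OF simple_graph_EH]
    by (intro sum.cong refl arg_cong2[where f = "(*)"] power2_sum_if_unique finite_lessThan)
      (use crosses_unique in blast)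
  also have "\<dots> = (\<Sum>k<s. \<Sum>e\<in>EH. if crosses e k then (\<delta> k)\<^sup>2 * w e else 0)"
    by (simp add: sum_distrib_left sum.swap[of _ EH] mult.commute if_distrib cong: if_cong)
  also have "\<dots> = (\<Sum>k<s. (\<delta> k)\<^sup>2 * cut_weight k)"
    unfolding cut_weight_def by (simp add: sum_distrib_left if_distrib cong: if_cong)
  finally show ?thesis .
qed

lemma quad_form_potential_E:
  "potential \<delta> \<bullet> (ulaplacian n E *\<^sub>v potential \<delta>) = (\<Sum>e\<in>E. (\<Sum>k<s. if crosses e k then \<delta> k else 0)\<^sup>2)"
  unfolding ulaplacian_def quad_form_potential[OF simple_graph_E] by simp

text \<open>Testing the Loewner inequalities with potentials that jump across one or two
  consecutive cuts compares cut weights in H with cut sizes in G.\<close>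

lemma cut_weight_le_cut_size:
  assumes k: "k < s"
  shows "(1 - eps) * cut_weight k \<le> cut_size k"
proof -
  let ?\<delta> = "\<lambda>j. if j = k then 1 else 0 :: real"
  have jump: "(\<Sum>j<s. if crosses e j then ?\<delta> j else 0) = (if crosses e k then 1 else 0)" for e
    using k by (simp add: if_distrib[of "\<lambda>x. if crosses e _ then x else 0"] sum.delta' cong: if_cong)
  have "potential ?\<delta> \<bullet> (ulaplacian n E *\<^sub>v potential ?\<delta>) = (\<Sum>e\<in>E. if crosses e k then 1 else 0)"
    unfolding quad_form_potential_E jump by (intro sum.cong) auto
  also have "\<dots> = cut_size k"
    unfolding cut_size_def by (rule sum_indicator_eq_card[OF simple_graph_finite[OF simple_graph_E]])
  finally have "potential ?\<delta> \<bullet> (ulaplacian n E *\<^sub>v potential ?\<delta>) = cut_size k" .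
  moreover have "potential ?\<delta> \<bullet> (laplacian n EH w *\<^sub>v potential ?\<delta>) = (\<Sum>j<s. if j = k then cut_weight j else 0)"
    unfolding quad_form_potential_EH by (intro sum.cong) auto
  ultimately show ?thesis using quad_form_lower[OF potential_carrier, of ?\<delta>] k by simp
qed

lemma adjacent_cuts_le:
  assumes k: "Suc k < s"
  shows "cut_size k + cut_size (Suc k) + 2 * double_cut_size k \<le> (1 + eps) * (cut_weight k + cut_weight (Suc k))"
proof -
  let ?\<delta> = "\<lambda>j. if j = k \<or> j = Suc k then 1 else 0 :: real"
  let ?a = "\<lambda>e. if crosses e k then 1 else 0 :: real"
  let ?b = "\<lambda>e. if crosses e (Suc k) then 1 else 0 :: real"
  let ?c = "\<lambda>e. if crosses e k \<and> crosses e (Suc k) then 1 else 0 :: real"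
  have finE: "finite E" by (rule simple_graph_finite[OF simple_graph_E])
  have jump: "(\<Sum>j<s. if crosses e j then ?\<delta> j else 0) = ?a e + ?b e" for e
  proof -
    have "(\<Sum>j<s. if crosses e j then ?\<delta> j else 0)
        = (\<Sum>j<s. (if j = k then ?a e else 0) + (if j = Suc k then ?b e else 0))"
      by (intro sum.cong) auto
    then show ?thesis using k by (simp add: sum.distrib sum.delta')
  qed
  have "potential ?\<delta> \<bullet> (ulaplacian n E *\<^sub>v potential ?\<delta>) = (\<Sum>e\<in>E. ?a e + ?b e + 2 * ?c e)"
    unfolding quad_form_potential_E jump by (intro sum.cong) (auto simp: power2_eq_square)
  also have "\<dots> = cut_size k + cut_size (Suc k) + 2 * double_cut_size k"
    unfolding cut_size_def double_cut_size_def
    by (simp add: sum.distrib sum_distrib_left[symmetric] sum_indicator_eq_card[OF finE])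
  finally have G: "potential ?\<delta> \<bullet> (ulaplacian n E *\<^sub>v potential ?\<delta>)
      = cut_size k + cut_size (Suc k) + 2 * double_cut_size k" .
  have "potential ?\<delta> \<bullet> (laplacian n EH w *\<^sub>v potential ?\<delta>)
      = (\<Sum>j<s. (if j = k then cut_weight j else 0) + (if j = Suc k then cut_weight j else 0))"
    unfolding quad_form_potential_EH by (intro sum.cong) auto
  also have "\<dots> = cut_weight k + cut_weight (Suc k)" using k by (simp add: sum.distrib sum.delta')
  finally show ?thesis using quad_form_upper[OF potential_carrier, of ?\<delta>] G by simp
qed

lemma double_cut_size_le: "64 * double_cut_size k \<le> cut_size k + cut_size (Suc k)"
proof (cases "Suc k < s")
  case False
  then have "{e\<in>E. crosses e k \<and> crosses e (Suc k)} = {}" using crosses_less by blast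
  then have "double_cut_size k = 0" unfolding double_cut_size_def by (metis card.empty of_nat_0)
  then show ?thesis using cut_size_nonneg[of k] cut_size_nonneg[of "Suc k"] by simp
next
  case True
  let ?X = "cut_size k + cut_size (Suc k)" and ?W = "cut_weight k + cut_weight (Suc k)"
  have lower: "(1 - eps) * ?W \<le> ?X"
    using cut_weight_le_cut_size[of k] cut_weight_le_cut_size[of "Suc k"] True by (simp add: distrib_left)
  have upper: "?X + 2 * double_cut_size k \<le> (1 + eps) * ?W" by (rule adjacent_cuts_le[OF True])
  have "(1 - eps) * (?X + 2 * double_cut_size k) \<le> (1 + eps) * ((1 - eps) * ?W)"
    using mult_left_mono[OF upper, of "1 - eps"] eps_le by (simp add: algebra_simps)
  also have "\<dots> \<le> (1 + eps) * ?X" using lower eps_pos by (simp add: mult_left_mono)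
  finally have "(1 - eps) * double_cut_size k \<le> eps * ?X" by (simp add: algebra_simps)
  then have "(1 - eps) * (64 * double_cut_size k) \<le> (64 * eps) * ?X" by simp
  also have "\<dots> \<le> (1 - eps) * ?X"
    using eps_le cut_size_nonneg[of k] cut_size_nonneg[of "Suc k"] by (intro mult_right_mono) auto
  finally show ?thesis using eps_le by simp
qed

lemma crossing_edges_subset:
  "{e\<in>E. crosses e k} \<subseteq> {e\<in>E. 0 < k \<and> crosses e (k - 1) \<and> crosses e (Suc (k - 1))}
     \<union> {e\<in>E. crosses e k \<and> crosses e (Suc k)} \<union> (\<lambda>(a, b). {a, b}) ` (layer k \<times> layer (Suc k))"
proof
  fix e assume "e \<in> {e\<in>E. crosses e k}"
  then have e: "e \<in> E" and ek: "crosses e k" by auto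
  from simple_graph_E e obtain a b where ab: "a < n" "b < n" "e = {a, b}" by (rule simple_graph_edgeE)
  from ek obtain x y where xy: "x \<in> e" "y \<in> e" "level x \<le> k" "k < level y"
    unfolding crosses_def by blast
  show "e \<in> {e\<in>E. 0 < k \<and> crosses e (k - 1) \<and> crosses e (Suc (k - 1))}
     \<union> {e\<in>E. crosses e k \<and> crosses e (Suc k)} \<union> (\<lambda>(a, b). {a, b}) ` (layer k \<times> layer (Suc k))"
  proof (cases "level x < k")
    case True
    then have "level x \<le> k - 1" "k - 1 < level y" "Suc (k - 1) = k" using xy by auto
    then have "crosses e (k - 1)" "crosses e (Suc (k - 1))"
      using xy(1,2) ek unfolding crosses_def by auto
    then show ?thesis using e True by auto
  next
    case False
    show ?thesis
    proof (cases "Suc k < level y")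
      case True
      have "level x \<le> Suc k" using xy by simp
      then have "crosses e (Suc k)" using xy(1,2) True unfolding crosses_def by blast
      then show ?thesis using e ek by auto
    next
      case False
      then have levels: "level x = k" "level y = Suc k" using xy \<open>\<not> level x < k\<close> by auto
      then have "x \<noteq> y" by auto
      then have "e = (\<lambda>(a, b). {a, b}) (x, y)" using ab(3) xy(1,2) by auto
      moreover have "(x, y) \<in> layer k \<times> layer (Suc k)"
        using ab xy(1,2) levels unfolding layer_def by auto
      ultimately show ?thesis by blast
    qed
  qed
qed

lemma cut_size_le:
  "cut_size k \<le> real (card (layer k)) * real (card (layer (Suc k)))
     + (if k = 0 then 0 else double_cut_size (k - 1)) + double_cut_size k"
proof -
  let ?S1 = "{e\<in>E. 0 < k \<and> crosses e (k - 1) \<and> crosses e (Suc (k - 1))}"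
  let ?S2 = "{e\<in>E. crosses e k \<and> crosses e (Suc k)}"
  let ?S3 = "(\<lambda>(a, b). {a, b}) ` (layer k \<times> layer (Suc k))"
  have finE: "finite E" by (rule simple_graph_finite[OF simple_graph_E])
  have "card {e\<in>E. crosses e k} \<le> card (?S1 \<union> ?S2 \<union> ?S3)"
    by (rule card_mono[OF _ crossing_edges_subset]) (simp add: finE layer_def)
  also have "\<dots> \<le> card ?S1 + card ?S2 + card ?S3"
    by (meson add_le_mono card_Un_le le_refl order_trans)
  also have "card ?S3 \<le> card (layer k) * card (layer (Suc k))"
    using card_image_le[of "layer k \<times> layer (Suc k)" "\<lambda>(a, b). {a, b}"]
    by (simp add: layer_def card_cartesian_product)
  finally have "cut_size k \<le> real (card ?S1) + real (card ?S2) + real (card (layer k)) * real (card (layer (Suc k)))"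
    unfolding cut_size_def by (simp flip: of_nat_add of_nat_mult)
  moreover have "real (card ?S1) = (if k = 0 then 0 else double_cut_size (k - 1))"
    by (simp add: double_cut_size_def)
  ultimately show ?thesis by (simp add: double_cut_size_def)
qed

lemma sum_card_layer_le:
  assumes "inj_on f K" and "finite K"
  shows "(\<Sum>k\<in>K. real (card (layer (f k)))) \<le> real n"
proof -
  have "(\<Sum>k\<in>K. card (layer (f k))) = card (\<Union>k\<in>K. layer (f k))"
    by (rule card_UN_disjoint[symmetric]) (use assms in \<open>auto simp: layer_def dest: inj_onD\<close>)
  also have "\<dots> \<le> card {..<n}" by (rule card_mono) (auto simp: layer_def)
  finally show ?thesis by (simp flip: of_nat_sum)
qed

lemma sqrt_double_cut_size_le:
  "sqrt (double_cut_size k) \<le> (sqrt (cut_size k) + sqrt (cut_size (Suc k))) / 8"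
proof -
  have "sqrt (double_cut_size k) \<le> sqrt ((cut_size k + cut_size (Suc k)) / 64)"
    using double_cut_size_le[of k] by simp
  also have "\<dots> = sqrt (cut_size k + cut_size (Suc k)) / 8" by (simp add: real_sqrt_divide)
  also have "\<dots> \<le> (sqrt (cut_size k) + sqrt (cut_size (Suc k))) / 8"
    using sqrt_add_le_add_sqrt[OF cut_size_nonneg cut_size_nonneg] by simp
  finally show ?thesis .
qed

lemma sqrt_cut_size_le:
  "sqrt (cut_size k) \<le> (real (card (layer k)) + real (card (layer (Suc k)))) / 2
     + (if k = 0 then 0 else sqrt (double_cut_size (k - 1))) + sqrt (double_cut_size k)"
proof -
  let ?m = "\<lambda>k. real (card (layer k))"
  let ?b = "if k = 0 then 0 else double_cut_size (k - 1)"
  have b: "0 \<le> ?b" by (simp add: double_cut_size_nonneg)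
  have "sqrt (cut_size k) \<le> sqrt (?m k * ?m (Suc k) + ?b + double_cut_size k)"
    using cut_size_le by simp
  also have "\<dots> \<le> sqrt (?m k * ?m (Suc k)) + sqrt ?b + sqrt (double_cut_size k)"
    using sqrt_add_le_add_sqrt[of "?m k * ?m (Suc k) + ?b" "double_cut_size k"]
      sqrt_add_le_add_sqrt[of "?m k * ?m (Suc k)" ?b] b double_cut_size_nonneg by simp
  also have "sqrt (?m k * ?m (Suc k)) \<le> (?m k + ?m (Suc k)) / 2"
    by (rule arith_geo_mean_sqrt) auto
  finally show ?thesis by (simp split: if_splits)
qed

lemma cut_size_top: "cut_size s = 0"
proof -
  have "{e\<in>E. crosses e s} = {}" using crosses_less by blast
  then show ?thesis unfolding cut_size_def by (metis card.empty of_nat_0)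
qed

text \<open>Summing the bound on each cut size, every layer is counted twice and every double
  crossing at most twice, and double crossings are few by the previous lemmas.\<close>

lemma sum_sqrt_cut_size_le: "(\<Sum>k<s. sqrt (cut_size k)) \<le> 2 * real n"
proof -
  let ?T = "\<Sum>k<s. sqrt (cut_size k)"
  let ?m = "\<lambda>k. real (card (layer k))"
  let ?B = "\<lambda>k. sqrt (double_cut_size k)"
  have "(\<Sum>k<s. ?B k) \<le> (\<Sum>k<s. (sqrt (cut_size k) + sqrt (cut_size (Suc k))) / 8)"
    by (intro sum_mono sqrt_double_cut_size_le)
  also have "\<dots> = (?T + (\<Sum>k<s. sqrt (cut_size (Suc k)))) / 8"
    by (simp only: sum_divide_distrib[symmetric] sum.distrib)
  also have "\<dots> \<le> (?T + ?T) / 8"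
    using sum_lessThan_Suc_le[of "\<lambda>k. sqrt (cut_size k)" s] cut_size_top cut_size_nonneg[of 0] by simp
  finally have B: "(\<Sum>k<s. ?B k) \<le> ?T / 4" by simp
  have "?T \<le> (\<Sum>k<s. (?m k + ?m (Suc k)) / 2 + (if k = 0 then 0 else ?B (k - 1)) + ?B k)"
    by (intro sum_mono sqrt_cut_size_le)
  also have "\<dots> = (\<Sum>k<s. ?m k) / 2 + (\<Sum>k<s. ?m (Suc k)) / 2
      + (\<Sum>k<s. if k = 0 then 0 else ?B (k - 1)) + (\<Sum>k<s. ?B k)"
    by (simp add: sum.distrib sum_divide_distrib add_divide_distrib)
  finally have "?T \<le> (\<Sum>k<s. ?m k) / 2 + (\<Sum>k<s. ?m (Suc k)) / 2 + 2 * (\<Sum>k<s. ?B k)"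
    using sum_lessThan_shift_le[of ?B s] double_cut_size_nonneg by simp
  moreover have "(\<Sum>k<s. ?m k) \<le> real n" using sum_card_layer_le[of id "{..<s}"] by simp
  moreover have "(\<Sum>k<s. ?m (Suc k)) \<le> real n" using sum_card_layer_le[of Suc "{..<s}"] by simp
  ultimately show ?thesis using B by linarith
qed

lemma cut_weight_pos:
  assumes walk: "walk_len EH u v l" and u: "level u = 0" and v: "level v = s" and k: "k < s"
  shows "0 < cut_weight k"
proof -
  obtain p where p: "p 0 = u" "p l = v" "\<And>i. i < l \<Longrightarrow> {p i, p (Suc i)} \<in> EH"
    using walk unfolding walk_len_def by blast
  have "level (p 0) \<le> k" "k < level (p l)" using p u v k by auto
  then obtain i where i: "i < l" "level (p i) \<le> k" "k < level (p (Suc i))"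
    using nat_crossing_step[of "\<lambda>i. level (p i)"] by blast
  let ?e = "{p i, p (Suc i)}"
  have e: "?e \<in> EH" using p(3) i(1) .
  have "crosses ?e k" unfolding crosses_def using i by blast
  then have "w ?e \<le> cut_weight k"
    unfolding cut_weight_def
    using member_le_sum[OF e, of "\<lambda>e. if crosses e k then w e else 0"] weight_pos
      simple_graph_finite[OF simple_graph_EH] by (simp add: less_imp_le)
  then show ?thesis using weight_pos[OF e] by simp
qed

lemma sum_inverse_sqrt_cut_weight_lower:
  assumes pos: "\<And>k. k < s \<Longrightarrow> 0 < cut_weight k"
  shows "(real s)\<^sup>2 * sqrt (1 - eps) \<le> 2 * real n * (\<Sum>k<s. 1 / sqrt (cut_weight k))"
proof -
  let ?D = "\<Sum>k<s. 1 / sqrt (cut_weight k)" and ?S = "\<Sum>k<s. sqrt (cut_weight k)"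
  have S_le: "sqrt (1 - eps) * ?S \<le> 2 * real n"
  proof -
    have "sqrt (1 - eps) * ?S \<le> (\<Sum>k<s. sqrt (cut_size k))"
      unfolding sum_distrib_left real_sqrt_mult[symmetric]
      by (intro sum_mono real_sqrt_le_mono cut_weight_le_cut_size) simp
    also have "\<dots> \<le> 2 * real n" by (rule sum_sqrt_cut_size_le)
    finally show ?thesis .
  qed
  have D_nonneg: "0 \<le> ?D" using pos by (intro sum_nonneg) (simp add: less_imp_le)
  have "(real s)\<^sup>2 \<le> ?D * ?S"
    using card_squared_le_sum_inverse_mult_sum[of "{..<s}" "\<lambda>k. sqrt (cut_weight k)"] pos by simp
  then have "(real s)\<^sup>2 * sqrt (1 - eps) \<le> ?D * ?S * sqrt (1 - eps)"
    using eps_le by (intro mult_right_mono) auto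
  also have "\<dots> = ?D * (sqrt (1 - eps) * ?S)" by simp
  also have "\<dots> \<le> ?D * (2 * real n)" by (rule mult_left_mono[OF S_le D_nonneg])
  finally show ?thesis by (simp add: mult_ac)
qed

lemma potential_with_large_drop:
  assumes walk: "walk_len EH u v l" and u: "u < n" and v: "v < n"
    and level_u: "level u = 0" and level_v: "level v = s"
  obtains x where "x \<in> carrier_vec n" "x \<bullet> (laplacian n EH w *\<^sub>v x) = real s"
    "(real s)\<^sup>2 * sqrt (1 - eps) \<le> 2 * real n * \<bar>x $ u - x $ v\<bar>"
proof
  define \<delta> where "\<delta> k = 1 / sqrt (cut_weight k)" for k
  have pos: "\<And>k. k < s \<Longrightarrow> 0 < cut_weight k"
    using cut_weight_pos[OF walk level_u level_v] by blast
  show "potential \<delta> \<in> carrier_vec n" by simp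
  have "(\<delta> k)\<^sup>2 * cut_weight k = 1" if "k < s" for k
    using pos[OF that] by (simp add: \<delta>_def power_divide)
  then have "potential \<delta> \<bullet> (laplacian n EH w *\<^sub>v potential \<delta>) = (\<Sum>k<s. 1)"
    unfolding quad_form_potential_EH by (intro sum.cong) auto
  then show "potential \<delta> \<bullet> (laplacian n EH w *\<^sub>v potential \<delta>) = real s" by simp
  have "0 \<le> (\<Sum>k<s. \<delta> k)" using pos by (intro sum_nonneg) (simp add: \<delta>_def less_imp_le)
  then have "\<bar>potential \<delta> $ u - potential \<delta> $ v\<bar> = (\<Sum>k<s. \<delta> k)"
    using u v level_u level_v by (simp add: potential_def)
  then show "(real s)\<^sup>2 * sqrt (1 - eps) \<le> 2 * real n * \<bar>potential \<delta> $ u - potential \<delta> $ v\<bar>"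
    using sum_inverse_sqrt_cut_weight_lower[OF pos] by (simp add: \<delta>_def)
qed

lemma eff_res_cubic_lower_bounds:
  assumes u: "u < n" and v: "v < n" and walk: "walk_len EH u v l"
    and level_u: "level u = 0" and level_v: "level v = s"
  shows "real s ^ 3 \<le> 5 * real n ^ 2 * eff_res n (ulaplacian n E) u v"
    and "real s ^ 3 \<le> 5 * real n ^ 2 * eff_res n (laplacian n EH w) u v"
proof -
  have reach_H: "reach EH u v" by (rule walk_len_imp_reach[OF walk])
  have reach_G: "reach E u v" by (rule reach_mono[OF reach_H EH_subset])
  obtain x where x: "x \<in> carrier_vec n" and energy_H: "x \<bullet> (laplacian n EH w *\<^sub>v x) = real s"
    and drop: "(real s)\<^sup>2 * sqrt (1 - eps) \<le> 2 * real n * \<bar>x $ u - x $ v\<bar>"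
    by (rule potential_with_large_drop[OF walk u v level_u level_v])
  have energy_G: "x \<bullet> (ulaplacian n E *\<^sub>v x) \<le> (1 + eps) * real s"
    using quad_form_upper[OF x] energy_H by simp
  have RG_nonneg: "0 \<le> eff_res n (ulaplacian n E) u v"
    unfolding ulaplacian_def by (rule eff_res_nonneg[OF simple_graph_E _ u v reach_G]) simp
  have RH_nonneg: "0 \<le> eff_res n (laplacian n EH w) u v"
    by (rule eff_res_nonneg[OF simple_graph_EH _ u v reach_H]) (rule weight_pos)
  have "\<bar>x $ u - x $ v\<bar>\<^sup>2 \<le> eff_res n (ulaplacian n E) u v * (x \<bullet> (ulaplacian n E *\<^sub>v x))"
    unfolding ulaplacian_def power2_abs by (rule eff_res_lower_bound[OF simple_graph_E _ u v reach_G x]) simp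
  also have "\<dots> \<le> eff_res n (ulaplacian n E) u v * ((1 + eps) * real s)"
    by (rule mult_left_mono[OF energy_G RG_nonneg])
  finally show "real s ^ 3 \<le> 5 * real n ^ 2 * eff_res n (ulaplacian n E) u v"
    using cubic_bound_from_potential_drop[OF _ _ _ RG_nonneg drop] eps_pos eps_le by simp
  have "\<bar>x $ u - x $ v\<bar>\<^sup>2 \<le> eff_res n (laplacian n EH w) u v * real s"
    unfolding power2_abs energy_H[symmetric]
    by (rule eff_res_lower_bound[OF simple_graph_EH _ u v reach_H x]) (rule weight_pos)
  also have "\<dots> \<le> eff_res n (laplacian n EH w) u v * ((1 + eps) * real s)"
    using eps_pos RH_nonneg by (intro mult_left_mono) (simp_all add: algebra_simps)
  finally show "real s ^ 3 \<le> 5 * real n ^ 2 * eff_res n (laplacian n EH w) u v"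
    using cubic_bound_from_potential_drop[OF _ _ _ RH_nonneg drop] eps_pos eps_le by simp
qed

end

section \<open>Breadth-first layering\<close>

lemma walk_len_refl: "walk_len F u u 0"
  unfolding walk_len_def by (rule exI[of _ "\<lambda>_. u"]) simp

lemma walk_len_snoc:
  assumes "walk_len F u a l" and "{a, b} \<in> F"
  shows "walk_len F u b (Suc l)"
proof -
  obtain p where p: "p 0 = u" "p l = a" "\<And>i. i < l \<Longrightarrow> {p i, p (Suc i)} \<in> F"
    using assms(1) unfolding walk_len_def by blast
  have "{(p(Suc l := b)) i, (p(Suc l := b)) (Suc i)} \<in> F" if "i < Suc l" for i
    using that p(2,3) assms(2) by (cases "i = l") auto
  then show ?thesis unfolding walk_len_def using p(1) by (intro exI[of _ "p(Suc l := b)"]) simp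
qed

lemma hop_dist_le: "walk_len F u i l \<Longrightarrow> hop_dist F u i \<le> l"
  unfolding hop_dist_def by (rule Least_le)

lemma walk_len_hop_dist: "walk_len F u i l \<Longrightarrow> walk_len F u i (hop_dist F u i)"
  unfolding hop_dist_def by (rule LeastI)

definition bfs_level :: "nat set set \<Rightarrow> nat \<Rightarrow> nat \<Rightarrow> nat \<Rightarrow> nat" where
  "bfs_level F u s i = (if \<exists>l. walk_len F u i l then min (hop_dist F u i) s else s)"

lemma bfs_level_le: "bfs_level F u s i \<le> s"
  by (simp add: bfs_level_def)

lemma bfs_level_source: "bfs_level F u s u = 0"
proof -
  have "hop_dist F u u = 0" using hop_dist_le[OF walk_len_refl[of F u]] by simp
  then show ?thesis using walk_len_refl[of F u] by (auto simp: bfs_level_def)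
qed

lemma bfs_level_target: "walk_len F u v l \<Longrightarrow> bfs_level F u (hop_dist F u v) v = hop_dist F u v"
  by (auto simp: bfs_level_def)

lemma bfs_level_edge:
  assumes "{a, b} \<in> F"
  shows "bfs_level F u s b \<le> bfs_level F u s a + 1"
proof (cases "\<exists>l. walk_len F u a l")
  case True
  then have "walk_len F u b (Suc (hop_dist F u a))"
    using walk_len_snoc[OF walk_len_hop_dist assms] by blast
  then have "hop_dist F u b \<le> Suc (hop_dist F u a)" "\<exists>l. walk_len F u b l"
    using hop_dist_le by blast+
  then show ?thesis using True by (auto simp: bfs_level_def)
next
  case False
  then show ?thesis using bfs_level_le[of F u s b] by (simp add: bfs_level_def)
qed

lemma eff_res_ge_hop_dist_cubed:
  assumes E: "simple_graph n E" and eps: "0 < eps" "eps \<le> 1 / 100"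
    and sparsifier: "spectral_sparsifier n eps E EH w"
    and u: "u < n" and v: "v < n" and connected: "\<exists>l. walk_len EH u v l"
  shows "real (hop_dist EH u v) ^ 3 / (5 * real n ^ 2) \<le> eff_res n (ulaplacian n E) u v"
    and "real (hop_dist EH u v) ^ 3 / (5 * real n ^ 2) \<le> eff_res n (laplacian n EH w) u v"
proof -
  obtain l where walk: "walk_len EH u v l" using connected by blast
  let ?s = "hop_dist EH u v"
  interpret layered_sparsifier n E EH w eps "bfs_level EH u ?s" ?s
    using E eps sparsifier
    by unfold_locales (auto intro: bfs_level_le bfs_level_edge[unfolded Suc_eq_plus1[symmetric]])
  note bounds = eff_res_cubic_lower_bounds[OF u v walk bfs_level_source bfs_level_target[OF walk]]
  show "real ?s ^ 3 / (5 * real n ^ 2) \<le> eff_res n (ulaplacian n E) u v"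
    and "real ?s ^ 3 / (5 * real n ^ 2) \<le> eff_res n (laplacian n EH w) u v"
    using bounds u by (simp_all add: divide_le_eq mult.commute)
qed

theorem corollary4p1:
  shows "\<exists>eps0 > 0. \<exists>C > 0. \<exists>k :: nat.
    \<forall>(n :: nat) (E :: nat set set) (EH :: nat set set) (w :: nat set \<Rightarrow> real) (eps :: real) (u :: nat) (v :: nat).
      simple_graph n E \<longrightarrow> 0 < eps \<longrightarrow> eps \<le> eps0 \<longrightarrow>
      spectral_sparsifier n eps E EH w \<longrightarrow>
      u < n \<longrightarrow> v < n \<longrightarrow> (\<exists>l. walk_len EH u v l) \<longrightarrow>
      eff_res n (ulaplacian n E) u v \<ge> C * real (hop_dist EH u v) ^ 3 / (real n ^ 2 * (1 + ln (real n)) ^ k) \<and>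
      eff_res n (laplacian n EH w) u v \<ge> C * real (hop_dist EH u v) ^ 3 / (real n ^ 2 * (1 + ln (real n)) ^ k)"
  using eff_res_ge_hop_dist_cubed
  by (intro exI[of _ "1 / 100 :: real"] exI[of _ "1 / 5 :: real"] exI[of _ "0 :: nat"] conjI allI impI) auto

end
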